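(* Fix an integer $q\ge2$, $c\in\mathbb{R}$ and $\lambda\in(-1/q-c,-c)$ such that $f_c$ satisfies the pre-$q$-Sturmian condition for $\lambda$, with Lipschitz function $\psi$ and constant $\beta$; regard $\psi$ as a $1$-periodic function on $\mathbb{R}$ and $T(x)=qx$ on $\mathbb{R}$. Let $\theta=\lambda+1/q+c\in(0,1/q)$ and $f=f_0$. Then: (i) For any $x\in(\lambda+q^{-1},\lambda+2q^{-1})$, with $t:=x-\lambda-q^{-1}$, $$\psi(T(x))-\psi(T(\lambda+q^{-1}))\ge f(q^{-1}-\theta-t)-f(q^{-1}-\theta)+f'(\theta)\frac{t}{q-1}.$$ (i)' For any $x\in(\lambda-q^{-1},\lambda)$, with $t:=\lambda-x$, $$\psi(T(x))-\psi(T(\lambda))\ge f(\theta-t)-f(\theta)+f'(q^{-1}-\theta)\frac{t}{q-1}.$$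
   Context: $\mathbb{T}=\mathbb{R}/\mathbb{Z}$. $f_0(x)=\log\left|\frac{\sin\pi qx}{\sin\pi x}\right|$ (value $\log q$ at integers), a $1$-periodic even function, real-analytic and strictly concave on $(-1/q,1/q)$; $f_c(x)=f_0(x+c)$. $C_\lambda=[\lambda,\lambda+1/q]\bmod1$. The function $f_c$ satisfies the pre-$q$-Sturmian condition for $\lambda$ if $f_c$ is Lipschitz on $C_\lambda$ and there exist a Lipschitz $\psi:\mathbb{T}\to\mathbb{R}$ and $\beta\in\mathbb{R}$ with $f_c(x)+\psi(x)-\psi(Tx)=\beta$ for all $x\in C_\lambda$, where $Tx=qx\bmod 1$. *)

theory Defs
  imports "HOL-Analysis.Analysis"
begin

definition f0 :: "nat \<Rightarrow> real \<Rightarrow> real" where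
  "f0 q x = (if x \<in> \<int> then ln (real q)
             else ln \<bar>sin (pi * real q * x) / sin (pi * x)\<bar>)"

definition fc :: "nat \<Rightarrow> real \<Rightarrow> real \<Rightarrow> real" where
  "fc q c x = f0 q (x + c)"

text \<open>Preimage in R of the arc C_lambda = [lambda, lambda + 1/q] mod 1.\<close>
definition Cset :: "nat \<Rightarrow> real \<Rightarrow> real set" where
  "Cset q lam = {x. \<exists>k::int. x - of_int k \<in> {lam .. lam + 1 / real q}}"

text \<open>Pre-q-Sturmian condition for lambda, witnessed by psi (a Lipschitz function
  on the circle, i.e. a 1-periodic Lipschitz function on R) and the constant beta;
  T x = q x mod 1, which is q x on R since psi is 1-periodic.\<close>
definition pre_sturmian_with ::
    "nat \<Rightarrow> real \<Rightarrow> real \<Rightarrow> (real \<Rightarrow> real) \<Rightarrow> real \<Rightarrow> bool" where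
  "pre_sturmian_with q c lam psi beta \<longleftrightarrow>
     (\<exists>L. L-lipschitz_on (Cset q lam) (fc q c)) \<and>
     (\<forall>x. psi (x + 1) = psi x) \<and>
     (\<exists>L. L-lipschitz_on UNIV psi) \<and>
     (\<forall>x \<in> Cset q lam. fc q c x + psi x - psi (real q * x) = beta)"

end

theory Submission
  imports Defs "HOL-Real_Asymp.Real_Asymp"
begin

text \<open>On the arc \<open>[lam, lam + 1/q]\<close> the cohomological equation turns the increment of
  \<open>psi \<circ> T\<close> minus that of \<open>psi\<close> into an increment of \<open>f0\<close> on \<open>[\<theta> - 1/q, \<theta>]\<close>, which is
  at least \<open>f0' \<theta>\<close> times the increment of the argument: \<open>f0\<close> increases left of \<open>0\<close> and is
  concave right of \<open>0\<close>. As \<open>T\<close> expands by \<open>q\<close>, a lower bound \<open>s\<close> for the slopes of \<open>psi\<close>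
  improves to \<open>(f0' \<theta> + s) / q\<close>; iterating from the Lipschitz bound shows that \<open>psi\<close> has
  slopes at least \<open>f0' \<theta> / (q - 1)\<close>. One more application of the equation gives (i), and
  (i)' is (i) for the data reflected by \<open>x \<mapsto> -x\<close>, which turns \<open>\<theta>\<close> into \<open>1/q - \<theta>\<close>.\<close>

definition unit_window_slope_ge :: "(real \<Rightarrow> real) \<Rightarrow> real \<Rightarrow> bool" where
  "unit_window_slope_ge g s \<longleftrightarrow>
     (\<forall>z1 z2. z1 \<le> z2 \<longrightarrow> z2 \<le> z1 + 1 \<longrightarrow> s * (z2 - z1) \<le> g z2 - g z1)"

lemma unit_window_slope_geD:
  "unit_window_slope_ge g s \<Longrightarrow> z1 \<le> z2 \<Longrightarrow> z2 \<le> z1 + 1 \<Longrightarrow> s * (z2 - z1) \<le> g z2 - g z1"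
  unfolding unit_window_slope_ge_def by blast

lemma unit_window_slope_ge_mono:
  assumes "unit_window_slope_ge g s" and "s' \<le> s"
  shows "unit_window_slope_ge g s'"
  unfolding unit_window_slope_ge_def
proof (intro allI impI)
  fix z1 z2 :: real assume z: "z1 \<le> z2" "z2 \<le> z1 + 1"
  have "s' * (z2 - z1) \<le> s * (z2 - z1)" using z assms(2) by (intro mult_right_mono) auto
  also have "\<dots> \<le> g z2 - g z1" using unit_window_slope_geD[OF assms(1) z] .
  finally show "s' * (z2 - z1) \<le> g z2 - g z1" .
qed

lemma lipschitz_imp_unit_window_slope_ge:
  assumes "L-lipschitz_on UNIV g"
  shows "unit_window_slope_ge g (- L)"
  unfolding unit_window_slope_ge_def
proof (intro allI impI)
  fix z1 z2 :: real assume "z1 \<le> z2"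
  have "\<bar>g z2 - g z1\<bar> \<le> L * \<bar>z2 - z1\<bar>"
    using lipschitz_onD[OF assms, of z2 z1] by (simp add: dist_real_def)
  then show "- L * (z2 - z1) \<le> g z2 - g z1" using \<open>z1 \<le> z2\<close> by simp
qed

lemma unit_window_slope_ge_sup:
  assumes "\<And>s'. s' < s \<Longrightarrow> unit_window_slope_ge g s'"
  shows "unit_window_slope_ge g s"
  unfolding unit_window_slope_ge_def
proof (intro allI impI)
  fix z1 z2 :: real assume z: "z1 \<le> z2" "z2 \<le> z1 + 1"
  show "s * (z2 - z1) \<le> g z2 - g z1"
  proof (cases "z1 = z2")
    case False
    with z have pos: "0 < z2 - z1" by simp
    have "s' \<le> (g z2 - g z1) / (z2 - z1)" if "s' < s" for s'
      using unit_window_slope_geD[OF assms[OF that] z] pos by (simp add: pos_le_divide_eq)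
    then have "s \<le> (g z2 - g z1) / (z2 - z1)" by (rule dense_le)
    then show ?thesis using pos by (simp add: pos_le_divide_eq)
  qed simp
qed

lemma periodic_unit_window_slope_ge:
  fixes g :: "real \<Rightarrow> real"
  assumes "periodic_fun_simple' g"
    and window: "\<And>w1 w2. a \<le> w1 \<Longrightarrow> w1 \<le> w2 \<Longrightarrow> w2 \<le> a + 1 \<Longrightarrow> s * (w2 - w1) \<le> g w2 - g w1"
  shows "unit_window_slope_ge g s"
  unfolding unit_window_slope_ge_def
proof (intro allI impI)
  interpret periodic_fun_simple' g by fact
  fix z1 z2 :: real assume z: "z1 \<le> z2" "z2 \<le> z1 + 1"
  define k where "k = \<lfloor>z1 - a\<rfloor>"
  define w1 where "w1 = z1 - of_int k"
  define w2 where "w2 = z2 - of_int k"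
  have g_w: "g w1 = g z1" "g w2 = g z2" by (simp_all add: w1_def w2_def minus_of_int)
  have w1: "a \<le> w1" "w1 < a + 1"
    unfolding w1_def k_def using floor_correct[of "z1 - a"] by linarith+
  have w: "w1 \<le> w2" "w2 \<le> w1 + 1" "w2 - w1 = z2 - z1" using z by (auto simp: w1_def w2_def)
  have "s * (w2 - w1) \<le> g w2 - g w1"
  proof (cases "w2 \<le> a + 1")
    case True
    then show ?thesis using window w1(1) w(1) by blast
  next
    case False
    have "s * (a + 1 - w1) \<le> g (a + 1) - g w1" using window w1 by simp
    moreover have "s * (w2 - 1 - a) \<le> g (w2 - 1) - g a" using window w1 w False by simp
    moreover have "g (a + 1) = g a" "g (w2 - 1) = g w2" by (simp_all add: plus_period minus_1)
    moreover have "s * (w2 - w1) = s * (a + 1 - w1) + s * (w2 - 1 - a)"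
      by (simp add: algebra_simps)
    ultimately show ?thesis by linarith
  qed
  then show "s * (z2 - z1) \<le> g z2 - g z1" by (simp only: w(3) g_w)
qed

lemma expanding_window_slope_step:
  fixes g :: "real \<Rightarrow> real" and q A s :: real
  assumes q: "q > 1" and per: "periodic_fun_simple' g"
    and expand: "\<And>y1 y2. lam \<le> y1 \<Longrightarrow> y1 \<le> y2 \<Longrightarrow> y2 \<le> lam + 1 / q \<Longrightarrow>
        A * (y2 - y1) \<le> (g (q * y2) - g (q * y1)) - (g y2 - g y1)"
    and slope: "unit_window_slope_ge g s"
  shows "unit_window_slope_ge g ((A + s) / q)"
proof (rule periodic_unit_window_slope_ge[OF per, of "q * lam"])
  fix w1 w2 assume w: "q * lam \<le> w1" "w1 \<le> w2" "w2 \<le> q * lam + 1"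
  define y1 where "y1 = w1 / q"
  define y2 where "y2 = w2 / q"
  have w_eq: "w1 = q * y1" "w2 = q * y2" using q by (simp_all add: y1_def y2_def)
  have y: "lam \<le> y1" "y1 \<le> y2" "y2 \<le> lam + 1 / q"
    using w q by (auto simp: y1_def y2_def field_simps)
  have "y2 - y1 \<le> 1 / q" using y by simp
  also have "\<dots> \<le> 1" using q by simp
  finally have "y2 \<le> y1 + 1" by simp
  then have "(A + s) * (y2 - y1) \<le> g w2 - g w1"
    using expand[OF y] unit_window_slope_geD[OF slope y(2)] unfolding w_eq distrib_right by linarith
  then show "(A + s) / q * (w2 - w1) \<le> g w2 - g w1"
    using q by (simp add: w_eq right_diff_distrib[symmetric])
qed

lemma expanding_window_slope_bound:
  fixes g :: "real \<Rightarrow> real" and q A L :: real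
  assumes q: "q > 1" and per: "periodic_fun_simple' g" and lip: "L-lipschitz_on UNIV g"
    and expand: "\<And>y1 y2. lam \<le> y1 \<Longrightarrow> y1 \<le> y2 \<Longrightarrow> y2 \<le> lam + 1 / q \<Longrightarrow>
        A * (y2 - y1) \<le> (g (q * y2) - g (q * y1)) - (g y2 - g y1)"
  shows "unit_window_slope_ge g (A / (q - 1))"
proof (rule unit_window_slope_ge_sup)
  define m where "m = A / (q - 1)"
  define C where "C = m + L"
  have A_eq: "A = m * (q - 1)" using q by (simp add: m_def)
  have iterate: "unit_window_slope_ge g (m - C / q ^ n)" for n
  proof (induction n)
    case 0
    show ?case using lipschitz_imp_unit_window_slope_ge[OF lip] by (simp add: C_def)
  next
    case (Suc n)
    have "(A + (m - C / q ^ n)) / q = (m * q - C / q ^ n) / q"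
      unfolding A_eq by (simp add: algebra_simps)
    also have "\<dots> = m - C / q ^ Suc n"
      using q by (simp add: diff_divide_distrib)
    finally have "(A + (m - C / q ^ n)) / q = m - C / q ^ Suc n" .
    then show ?case using expanding_window_slope_step[OF q per expand Suc.IH] by simp
  qed
  fix s' assume "s' < A / (q - 1)"
  then have gap: "0 < m - s'" by (simp add: m_def)
  obtain n where "\<bar>C\<bar> / (m - s') < q ^ n" using real_arch_pow[OF q] by blast
  then have "\<bar>C\<bar> < (m - s') * q ^ n" using gap by (simp add: pos_divide_less_eq mult.commute)
  then have "C / q ^ n \<le> m - s'" using q by (simp add: pos_divide_le_eq)
  then show "unit_window_slope_ge g s'"
    by (intro unit_window_slope_ge_mono[OF iterate[of n]]) linarith
qed

lemma f0_minus [simp]: "f0 q (- x) = f0 q x"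
  by (simp add: f0_def)

lemma abs_sin_of_nat_mult_le: "\<bar>sin (real n * x)\<bar> \<le> real n * \<bar>sin x\<bar>"
proof (induction n)
  case (Suc n)
  have "sin (real (Suc n) * x) = sin (real n * x) * cos x + cos (real n * x) * sin x"
    by (simp add: distrib_right sin_add)
  also have "\<bar>\<dots>\<bar> \<le> \<bar>sin (real n * x)\<bar> * \<bar>cos x\<bar> + \<bar>cos (real n * x)\<bar> * \<bar>sin x\<bar>"
    by (metis abs_mult abs_triangle_ineq)
  also have "\<dots> \<le> \<bar>sin (real n * x)\<bar> + \<bar>sin x\<bar>"
    by (intro add_mono) (auto intro: mult_left_le mult_left_le_one_le abs_cos_le_one)
  finally show ?case using Suc by (simp add: distrib_right)
qed simp

lemma sin_pos_below_pi_div: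
  fixes Q x :: real
  assumes "Q \<ge> 1" and "0 < x" and "x < pi / Q"
  shows "sin x > 0" and "sin (Q * x) > 0"
proof -
  have "pi / Q \<le> pi" using assms(1) by (simp add: field_simps)
  then show "sin x > 0" using assms by (intro sin_gt_zero) auto
  have "Q * x < pi" using assms by (simp add: field_simps)
  then show "sin (Q * x) > 0" using assms by (intro sin_gt_zero) auto
qed

lemma cot_mult_le_cot:
  fixes Q x :: real
  assumes Q: "Q \<ge> 1" and x: "0 < x" "x < pi / Q"
  shows "Q * cot (Q * x) \<le> cot x"
proof -
  let ?k = "\<lambda>y. cos y * sin (Q * y) - Q * cos (Q * y) * sin y"
  have "?k 0 \<le> ?k x"
  proof (rule DERIV_nonneg_imp_increasing_open[of 0 x])
    fix y assume y: "0 < y" "y < x"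
    then have "sin y > 0" "sin (Q * y) > 0" using sin_pos_below_pi_div[OF Q] x by auto
    moreover have "Q\<^sup>2 - 1 \<ge> 0" using Q by (simp add: one_le_power)
    ultimately have "(Q\<^sup>2 - 1) * sin (Q * y) * sin y \<ge> 0" by simp
    moreover have "(?k has_real_derivative (Q\<^sup>2 - 1) * sin (Q * y) * sin y) (at y)"
      by (auto intro!: derivative_eq_intros simp: algebra_simps power2_eq_square)
    ultimately show "\<exists>d. (?k has_real_derivative d) (at y) \<and> d \<ge> 0" by blast
  qed (use x in \<open>auto intro!: continuous_intros\<close>)
  then have "Q * cos (Q * x) * sin x \<le> cos x * sin (Q * x)" by simp
  then show ?thesis using sin_pos_below_pi_div[OF Q x] by (simp add: cot_def field_simps)
qed

lemma cot_mult_minus_cot_antimono: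
  fixes x1 x2 :: real
  assumes n: "n \<ge> 1" and x: "0 < x1" "x1 \<le> x2" "x2 < pi / real n"
  shows "real n * cot (real n * x2) - cot x2 \<le> real n * cot (real n * x1) - cot x1"
proof -
  define Q where "Q = real n"
  have Q: "Q \<ge> 1" using n by (simp add: Q_def)
  let ?H = "\<lambda>x. Q * cot (Q * x) - cot x"
  have deriv: "(?H has_real_derivative
      Q * (- inverse (sin (Q * y) ^ 2) * Q) - (- inverse (sin y ^ 2))) (at y)"
    if "0 < y" "y < pi / Q" for y
  proof -
    have ns: "sin y \<noteq> 0" "sin (Q * y) \<noteq> 0" using sin_pos_below_pi_div[OF Q that] by auto
    have "((\<lambda>x. Q * x) has_real_derivative Q) (at y)" by (auto intro!: derivative_eq_intros)
    from DERIV_chain2[OF DERIV_cot[OF ns(2)] this]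
    have "((\<lambda>x. cot (Q * x)) has_real_derivative - inverse (sin (Q * y) ^ 2) * Q) (at y)" by simp
    then show ?thesis using ns by (intro DERIV_diff DERIV_cmult DERIV_cot)
  qed
  have "?H x2 \<le> ?H x1"
  proof (rule DERIV_nonpos_imp_decreasing_open[OF x(2)])
    fix y assume "x1 < y" "y < x2"
    then have y: "0 < y" "y < pi / Q" using x by (auto simp: Q_def)
    have s: "sin y > 0" "sin (Q * y) > 0" using sin_pos_below_pi_div[OF Q y] by auto
    have "sin (Q * y) \<le> Q * sin y" using abs_sin_of_nat_mult_le[of n y] s by (simp add: Q_def)
    then have "sin (Q * y) ^ 2 \<le> (Q * sin y) ^ 2" using s by (intro power_mono) auto
    then have "inverse (sin y ^ 2) \<le> Q\<^sup>2 * inverse (sin (Q * y) ^ 2)"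
      using s by (simp add: field_simps power_mult_distrib)
    then have "Q * (- inverse (sin (Q * y) ^ 2) * Q) - (- inverse (sin y ^ 2)) \<le> 0"
      by (simp add: power2_eq_square algebra_simps)
    then show "\<exists>d. (?H has_real_derivative d) (at y) \<and> d \<le> 0" using deriv[OF y] by blast
  next
    show "continuous_on {x1..x2} ?H"
      using x deriv by (intro continuous_at_imp_continuous_on ballI DERIV_isCont[OF deriv])
        (auto simp: Q_def)
  qed
  then show ?thesis by (simp add: Q_def)
qed

lemma f0_has_real_derivative:
  assumes q: "q > 0" and u: "0 < u" "u < 1 / real q"
  shows "(f0 q has_real_derivative pi * (real q * cot (real q * (pi * u)) - cot (pi * u))) (at u)"
proof -
  have Q: "real q \<ge> 1" using q by simp
  have pos: "sin (pi * v) > 0" "sin (pi * real q * v) > 0" if "0 < v" "v < 1 / real q" for v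
    using sin_pos_below_pi_div[OF Q, of "pi * v"] that Q by (auto simp: field_simps)
  let ?g = "\<lambda>v. ln (sin (pi * real q * v)) - ln (sin (pi * v))"
  have "(?g has_real_derivative pi * (real q * cot (real q * (pi * u)) - cot (pi * u))) (at u)"
    using pos u by (auto intro!: derivative_eq_intros simp: cot_def field_simps mult_ac)
  then show ?thesis
  proof (rule has_field_derivative_transform_within_open[of _ _ _ "{0<..<1 / real q}"])
    show "u \<in> {0<..<1 / real q}" using u by simp
    fix v assume "v \<in> {0<..<1 / real q}"
    then have v: "0 < v" "v < 1 / real q" by auto
    have "1 / real q \<le> 1" using Q by simp
    then have "v \<notin> \<int>" using v Ints_nonzero_abs_less1[of v] by auto
    then show "?g v = f0 q v"
      using pos[OF v] by (simp add: f0_def ln_div)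
  qed simp
qed

lemma isCont_f0_0:
  assumes "q > 0"
  shows "isCont (f0 q) 0"
proof -
  have "real q > 0" using assms by simp
  then have "((\<lambda>x. sin (pi * real q * x) / sin (pi * x)) \<longlongrightarrow> real q) (at 0)"
    by real_asymp
  then have "((\<lambda>x. ln \<bar>sin (pi * real q * x) / sin (pi * x)\<bar>) \<longlongrightarrow> ln \<bar>real q\<bar>) (at 0)"
    using assms by (intro tendsto_intros) auto
  moreover have "\<forall>\<^sub>F x in at 0. ln \<bar>sin (pi * real q * x) / sin (pi * x)\<bar> = f0 q x"
    unfolding eventually_at
    by (rule exI[of _ 1]) (auto simp: f0_def dest: Ints_nonzero_abs_less1)
  ultimately have "(f0 q \<longlongrightarrow> ln (real q)) (at 0)" by (simp add: tendsto_cong)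
  then show ?thesis by (simp add: isCont_def f0_def)
qed

lemma continuous_on_f0:
  assumes q: "q > 0"
  shows "continuous_on {- 1 / real q <..< 1 / real q} (f0 q)"
proof (intro continuous_at_imp_continuous_on ballI)
  fix u assume u: "u \<in> {- 1 / real q <..< 1 / real q}"
  consider "u = 0" | "0 < u" | "u < 0" by linarith
  then show "isCont (f0 q) u"
  proof cases
    case 1
    then show ?thesis using isCont_f0_0[OF q] by simp
  next
    case 2
    then show ?thesis using u DERIV_isCont[OF f0_has_real_derivative[OF q]] by auto
  next
    case 3
    then have "isCont (f0 q) (- u)"
      using u DERIV_isCont[OF f0_has_real_derivative[OF q, of "- u"]] by auto
    from isCont_o2[OF continuous_ident[THEN isCont_minus] this] show ?thesis by simp
  qed
qed

lemma f0_antimono: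
  assumes q: "q > 0" and v: "0 \<le> v1" "v1 \<le> v2" "v2 < 1 / real q"
  shows "f0 q v2 \<le> f0 q v1"
proof (rule DERIV_nonpos_imp_decreasing_open[OF v(2)])
  fix y assume "v1 < y" "y < v2"
  then have y: "0 < y" "y < 1 / real q" using v by auto
  have "pi * y < pi * (1 / real q)" using y by (intro mult_strict_left_mono) auto
  then have "real q * cot (real q * (pi * y)) - cot (pi * y) \<le> 0"
    using q y cot_mult_le_cot[of "real q" "pi * y"] by simp
  then show "\<exists>d. (f0 q has_real_derivative d) (at y) \<and> d \<le> 0"
    using f0_has_real_derivative[OF q y] by (intro exI) (auto simp: mult_nonneg_nonpos)
next
  have "- 1 / real q < 0" using q by simp
  then have "{v1..v2} \<subseteq> {- 1 / real q <..< 1 / real q}" using v by auto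
  then show "continuous_on {v1..v2} (f0 q)"
    using continuous_on_f0[OF q] continuous_on_subset by blast
qed

lemma f0_increment_ge_deriv:
  assumes q: "q > 0" and th: "0 < \<theta>" "\<theta> < 1 / real q"
    and u: "\<theta> - 1 / real q \<le> u1" "u1 \<le> u2" "u2 \<le> \<theta>"
  shows "deriv (f0 q) \<theta> * (u2 - u1) \<le> f0 q u2 - f0 q u1"
proof -
  define d where "d v = pi * (real q * cot (real q * (pi * v)) - cot (pi * v))" for v
  have pi_scaled: "pi * v < pi / real q" if "v < 1 / real q" for v
    using mult_strict_left_mono[OF that pi_gt_zero] by simp
  have f0_deriv: "(f0 q has_real_derivative d v) (at v)" if "0 < v" "v < 1 / real q" for v
    unfolding d_def using f0_has_real_derivative[OF q that] .
  have a: "deriv (f0 q) \<theta> = d \<theta>" using DERIV_imp_deriv[OF f0_deriv[OF th]] .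
  have a_nonpos: "d \<theta> \<le> 0"
    using cot_mult_le_cot[of "real q" "pi * \<theta>"] q th pi_scaled[OF th(2)]
    by (simp add: d_def mult_nonneg_nonpos)
  have d_ge: "d \<theta> \<le> d v" if "0 < v" "v \<le> \<theta>" for v
    using cot_mult_minus_cot_antimono[of q "pi * v" "pi * \<theta>"] q that pi_scaled[OF th(2)]
    by (simp add: d_def)
  have right: "f0 q v1 - d \<theta> * v1 \<le> f0 q v2 - d \<theta> * v2" if v: "0 \<le> v1" "v1 \<le> v2" "v2 \<le> \<theta>" for v1 v2
  proof (rule DERIV_nonneg_imp_increasing_open[OF v(2)])
    fix y assume "v1 < y" "y < v2"
    then have y: "0 < y" "y < 1 / real q" "y \<le> \<theta>" using v th by auto
    have "((\<lambda>v. f0 q v - d \<theta> * v) has_real_derivative d y - d \<theta>) (at y)"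
      using f0_deriv[OF y(1,2)] by (auto intro!: derivative_eq_intros)
    then show "\<exists>D. ((\<lambda>v. f0 q v - d \<theta> * v) has_real_derivative D) (at y) \<and> 0 \<le> D"
      using d_ge[OF y(1,3)] by auto
  next
    have "- 1 / real q < 0" using q by simp
    then have "{v1..v2} \<subseteq> {- 1 / real q <..< 1 / real q}" using v th by auto
    then show "continuous_on {v1..v2} (\<lambda>v. f0 q v - d \<theta> * v)"
      using continuous_on_subset[OF continuous_on_f0[OF q]] by (intro continuous_intros) auto
  qed
  have left: "f0 q w1 \<le> f0 q w2" if w: "\<theta> - 1 / real q \<le> w1" "w1 \<le> w2" "w2 \<le> 0" for w1 w2
    using f0_antimono[OF q, of "- w2" "- w1"] w th by simp
  consider "u2 \<le> 0" | "0 \<le> u1" | "u1 < 0" "0 < u2" by linarith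
  then have "d \<theta> * (u2 - u1) \<le> f0 q u2 - f0 q u1"
  proof cases
    case 1
    moreover have "d \<theta> * (u2 - u1) \<le> 0" using u a_nonpos by (simp add: mult_nonpos_nonneg)
    ultimately show ?thesis using left[of u1 u2] u by simp
  next
    case 2
    then show ?thesis using right[of u1 u2] u by (simp add: algebra_simps)
  next
    case 3
    moreover have "0 \<le> d \<theta> * u1" using 3 a_nonpos by (simp add: mult_nonpos_nonpos)
    ultimately show ?thesis using right[of 0 u2] left[of u1 0] u by (simp add: algebra_simps)
  qed
  then show ?thesis by (simp add: a)
qed

lemma pre_sturmian_with_reflect:
  assumes "pre_sturmian_with q c lam psi beta"
  shows "pre_sturmian_with q (- c) (- lam - 1 / real q) (\<lambda>x. psi (- x)) beta"
proof -
  from assms obtain Lf Lp where lip_fc: "Lf-lipschitz_on (Cset q lam) (fc q c)"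
    and per: "\<forall>x. psi (x + 1) = psi x" and lip: "Lp-lipschitz_on UNIV psi"
    and coh: "\<forall>x \<in> Cset q lam. fc q c x + psi x - psi (real q * x) = beta"
    unfolding pre_sturmian_with_def by blast
  have Cset: "- x \<in> Cset q lam" if "x \<in> Cset q (- lam - 1 / real q)" for x
  proof -
    from that obtain k :: int where "x - of_int k \<in> {- lam - 1 / real q .. - lam}"
      by (auto simp: Cset_def)
    then have "- x - of_int (- k) \<in> {lam .. lam + 1 / real q}" by auto
    then show ?thesis unfolding Cset_def by blast
  qed
  have fc: "fc q (- c) x = fc q c (- x)" for x
    using f0_minus[of q "x - c"] by (simp add: fc_def)
  have "Lf-lipschitz_on (Cset q (- lam - 1 / real q)) (fc q (- c))"
    using lipschitz_on_nonneg[OF lip_fc] lipschitz_onD[OF lip_fc Cset Cset]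
    by (intro lipschitz_onI) (auto simp: fc dist_minus)
  moreover have "\<forall>x. psi (- (x + 1)) = psi (- x)"
    using per by (metis minus_add_distrib diff_add_cancel diff_conv_add_uminus)
  moreover have "Lp-lipschitz_on UNIV (\<lambda>x. psi (- x))"
  proof (rule lipschitz_onI)
    fix x y :: real
    show "dist (psi (- x)) (psi (- y)) \<le> Lp * dist x y"
      using lipschitz_onD[OF lip, of "- x" "- y"] by (simp add: dist_minus)
  qed (rule lipschitz_on_nonneg[OF lip])
  moreover have "\<forall>x \<in> Cset q (- lam - 1 / real q).
      fc q (- c) x + psi (- x) - psi (- (real q * x)) = beta"
  proof
    fix x assume "x \<in> Cset q (- lam - 1 / real q)"
    from bspec[OF coh Cset[OF this]]
    show "fc q (- c) x + psi (- x) - psi (- (real q * x)) = beta" by (simp add: fc)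
  qed
  ultimately show ?thesis unfolding pre_sturmian_with_def by blast
qed

lemma pre_sturmian_increment_right:
  assumes q: "q \<ge> 2" and lam: "- 1 / real q - c < lam" "lam < - c"
    and stu: "pre_sturmian_with q c lam psi beta"
    and \<theta>: "\<theta> = lam + 1 / real q + c"
    and x: "x \<in> {lam + 1 / real q <..< lam + 2 / real q}" and t: "t = x - lam - 1 / real q"
  shows "f0 q (1 / real q - \<theta> - t) - f0 q (1 / real q - \<theta>) + deriv (f0 q) \<theta> * t / (real q - 1)
         \<le> psi (real q * x) - psi (real q * (lam + 1 / real q))"
proof -
  from stu obtain Lp where per: "periodic_fun_simple' psi" and lip: "Lp-lipschitz_on UNIV psi"
    and coh: "\<forall>y \<in> Cset q lam. fc q c y + psi y - psi (real q * y) = beta"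
    unfolding pre_sturmian_with_def periodic_fun_simple'_def by blast
  interpret periodic_fun_simple' psi by fact
  have Q: "real q > 1" using q by simp
  have cohom: "psi (real q * y) = f0 q (y + c) + psi y - beta"
    if "lam \<le> y" "y \<le> lam + 1 / real q" for y
  proof -
    have "y \<in> Cset q lam" unfolding Cset_def using that by (intro CollectI exI[of _ 0]) simp
    then show ?thesis using coh by (auto simp: fc_def)
  qed
  have th: "0 < \<theta>" "\<theta> < 1 / real q" using lam \<theta> by auto
  have expand:
    "deriv (f0 q) \<theta> * (y2 - y1) \<le> (psi (real q * y2) - psi (real q * y1)) - (psi y2 - psi y1)"
    if y: "lam \<le> y1" "y1 \<le> y2" "y2 \<le> lam + 1 / real q" for y1 y2
    using f0_increment_ge_deriv[of q \<theta> "y1 + c" "y2 + c"] cohom[of y1] cohom[of y2] y q th \<theta>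
    by simp
  have slope: "unit_window_slope_ge psi (deriv (f0 q) \<theta> / (real q - 1))"
    using expanding_window_slope_bound[OF Q per lip expand] .
  have t_bounds: "0 < t" "t < 1 / real q" using x t by auto
  moreover have "1 / real q < 1" using Q by simp
  ultimately have "t \<le> 1" by linarith
  then have psi_incr: "deriv (f0 q) \<theta> / (real q - 1) * t \<le> psi (lam + t) - psi lam"
    using unit_window_slope_geD[OF slope, of lam "lam + t"] t_bounds by simp
  have "real q * x = real q * (lam + t) + 1" using t Q by (simp add: field_simps)
  then have "psi (real q * x) = f0 q (lam + t + c) + psi (lam + t) - beta"
    using cohom[of "lam + t"] t_bounds plus_period by simp
  moreover have "real q * (lam + 1 / real q) = real q * lam + 1" using Q by (simp add: field_simps)
  then have "psi (real q * (lam + 1 / real q)) = f0 q (lam + c) + psi lam - beta"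
    using cohom[of lam] t_bounds plus_period by simp
  moreover have "f0 q (1 / real q - \<theta> - t) = f0 q (lam + t + c)"
    and "f0 q (1 / real q - \<theta>) = f0 q (lam + c)"
    using f0_minus[of q "lam + t + c"] f0_minus[of q "lam + c"] by (simp_all add: \<theta> algebra_simps)
  ultimately show ?thesis using psi_incr by simp
qed

theorem lemma5p5:
  fixes q :: nat and c lam beta :: real and psi :: "real \<Rightarrow> real"
  assumes "q \<ge> 2"
    and "- 1 / real q - c < lam" and "lam < - c"
    and "pre_sturmian_with q c lam psi beta"
  shows "(\<forall>x \<in> {lam + 1 / real q <..< lam + 2 / real q}.
            let \<theta> = lam + 1 / real q + c; t = x - lam - 1 / real q in
            psi (real q * x) - psi (real q * (lam + 1 / real q))
              \<ge> f0 q (1 / real q - \<theta> - t) - f0 q (1 / real q - \<theta>)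
                 + deriv (f0 q) \<theta> * t / (real q - 1))
       \<and> (\<forall>x \<in> {lam - 1 / real q <..< lam}.
            let \<theta> = lam + 1 / real q + c; t = lam - x in
            psi (real q * x) - psi (real q * lam)
              \<ge> f0 q (\<theta> - t) - f0 q \<theta>
                 + deriv (f0 q) (1 / real q - \<theta>) * t / (real q - 1))"
  unfolding Let_def
proof (intro conjI ballI, goal_cases)
  case (1 x)
  with assms show ?case by (intro pre_sturmian_increment_right) auto
next
  case (2 x)
  define \<theta> where "\<theta> = lam + 1 / real q + c"
  have "- 1 / real q - (- c) < - lam - 1 / real q" "- lam - 1 / real q < - (- c)"
    using assms(2,3) by simp_all
  then have "f0 q (1 / real q - (1 / real q - \<theta>) - (lam - x)) - f0 q (1 / real q - (1 / real q - \<theta>))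
      + deriv (f0 q) (1 / real q - \<theta>) * (lam - x) / (real q - 1)
    \<le> psi (- (real q * - x)) - psi (- (real q * (- lam - 1 / real q + 1 / real q)))"
    using 2 pre_sturmian_with_reflect[OF assms(4)]
    by (intro pre_sturmian_increment_right[OF assms(1)]) (auto simp: \<theta>_def)
  then show ?case unfolding \<theta>_def[symmetric] by simp
qed

end
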